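(* Let $d\geq 3$, $k\geq 1$ and $n=kd-1$. Let $\Delta'=(s_2s_3\cdots s_n)(s_2s_3\cdots s_{n-1})\cdots(s_2s_3)(s_2)\in B_{n+1}$ and $u=[s_1,\Delta'^2]=s_1\Delta'^2s_1^{-1}\Delta'^{-2}$. Then $\rho_n(d)(u)$ is a non-trivial unipotent element of $U(h)$ lying in the kernel $U_0$ of the natural map $U(h)\to U(\overline h)$. Here $U_0$ is the group of unitary $g$ with $g(v)=v$ and $g(x)-x\in Av$ for all $x$.
   Context: $A=\mathbb{Z}[q,q^{-1}]/(\Phi_d(q))$, where $\Phi_d$ is the $d$-th cyclotomic polynomial. $\rho_n(d):B_{n+1}\to GL_n(A)$ is the reduced Burau representation reduced mod $\Phi_d(q)$. It sends the generator $s_j$ to $T_j$, where $T_j(e_j)=-qe_j$, $T_j(e_{j-1})=e_{j-1}+qe_j$, $T_j(e_{j+1})=e_{j+1}+e_j$, and $T_j(e_k)=e_k$ for $|k-j|\geq 2$, with $e_1,\dots,e_n$ the standard basis. It preserves the sesquilinear Hermitian form $h=h_n$ given by $h(e_j,e_j)=(q+1)^2/q$, $h(e_j,e_{j+1})=-(q+1)$, $h(e_{j+1},e_j)=-(1+q^{-1})$, and $h(e_j,e_k)=0$ for $|j-k|\geq 2$. For $n=kd-1$, this form is degenerate with null space $Av$, where $v=\sum_{j=1}^{n}\frac{q^j-1}{q-1}e_j$. $\overline h$ is the induced non-degenerate form on $A^n/Av$. $U(h)$ and $U(\overline h)$ are the unitary groups of these forms, and the natural map $U(h)\to U(\overline h)$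 is induced by passing to the quotient. *)

theory Defs
  imports Complex_Main "HOL-Computational_Algebra.Polynomial" "Jordan_Normal_Form.Matrix"
begin

text \<open>The ring A = Z[q,q^-1]/(Phi_d(q)) is realised as its isomorphic image Z[zeta_d] inside
  the complex numbers, via q |-> zeta_d = exp(2 pi i / d).  Under this isomorphism the
  involution q |-> q^-1 becomes complex conjugation.\<close>

definition zeta :: "nat \<Rightarrow> complex" where
  "zeta d = cis (2 * pi / real d)"

definition cyc_ring :: "nat \<Rightarrow> complex set" where
  "cyc_ring d = {poly (map_poly of_int p) (zeta d) | p :: int poly. True}"

definition A_vec :: "nat \<Rightarrow> nat \<Rightarrow> complex vec \<Rightarrow> bool" where
  "A_vec d n x \<longleftrightarrow> x \<in> carrier_vec n \<and> (\<forall>i<n. x $ i \<in> cyc_ring d)"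

definition A_mat :: "nat \<Rightarrow> nat \<Rightarrow> complex mat \<Rightarrow> bool" where
  "A_mat d n g \<longleftrightarrow> g \<in> carrier_mat n n \<and> (\<forall>i<n. \<forall>j<n. g $$ (i, j) \<in> cyc_ring d)"

text \<open>Reduced Burau matrix T_j (generator s_j, 1 <= j <= n) acting on A^n; basis vector e_i
  (1-based) is index i-1; column k holds the coordinates of T_j(e_(k+1)).\<close>

definition burau_gen :: "nat \<Rightarrow> nat \<Rightarrow> nat \<Rightarrow> complex mat" where
  "burau_gen d n j = mat n n (\<lambda>(i, k).
     let q = zeta d; i' = i + 1; k' = k + 1 in
     if k' = j then (if i' = j then - q else 0)
     else if k' + 1 = j then (if i' = k' then 1 else if i' = j then q else 0)
     else if k' = j + 1 then (if i' = k' \<or> i' = j then 1 else 0)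
     else (if i' = k' then 1 else 0))"

definition burau_gen_inv :: "nat \<Rightarrow> nat \<Rightarrow> nat \<Rightarrow> complex mat" where
  "burau_gen_inv d n j = (SOME B. B \<in> carrier_mat n n \<and> burau_gen d n j * B = 1\<^sub>m n \<and> B * burau_gen d n j = 1\<^sub>m n)"

text \<open>Braid words: (j, True) is s_j, (j, False) is s_j^-1.\<close>

type_synonym braid_word = "(nat \<times> bool) list"

definition rho :: "nat \<Rightarrow> nat \<Rightarrow> braid_word \<Rightarrow> complex mat" where
  "rho d n w = foldr (\<lambda>(j, b) M. (if b then burau_gen d n j else burau_gen_inv d n j) * M) w (1\<^sub>m n)"

definition inv_word :: "braid_word \<Rightarrow> braid_word" where
  "inv_word w = rev (map (\<lambda>(j, b). (j, \<not> b)) w)"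

definition delta' :: "nat \<Rightarrow> braid_word" where
  "delta' n = concat (map (\<lambda>m. map (\<lambda>j. (j, True)) [2..<m+1]) (rev [2..<n+1]))"

definition u_word :: "nat \<Rightarrow> braid_word" where
  "u_word n = [(1, True)] @ delta' n @ delta' n @ [(1, False)]
              @ inv_word (delta' n) @ inv_word (delta' n)"

definition h_gram :: "nat \<Rightarrow> nat \<Rightarrow> nat \<Rightarrow> complex" where
  "h_gram d j k = (let q = zeta d in
     if j = k then (q + 1)^2 / q
     else if k = j + 1 then - (q + 1)
     else if j = k + 1 then - (1 + inverse q)
     else 0)"

definition hform :: "nat \<Rightarrow> nat \<Rightarrow> complex vec \<Rightarrow> complex vec \<Rightarrow> complex" where
  "hform d n x y = (\<Sum>j<n. \<Sum>k<n. x $ j * h_gram d j k * cnj (y $ k))"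

definition null_vec :: "nat \<Rightarrow> nat \<Rightarrow> complex vec" where
  "null_vec d n = vec n (\<lambda>i. (zeta d ^ (i + 1) - 1) / (zeta d - 1))"

definition unitary_grp :: "nat \<Rightarrow> nat \<Rightarrow> complex mat set" where
  "unitary_grp d n = {g. A_mat d n g \<and>
      (\<exists>g'. A_mat d n g' \<and> g * g' = 1\<^sub>m n \<and> g' * g = 1\<^sub>m n) \<and>
      (\<forall>x y. A_vec d n x \<longrightarrow> A_vec d n y \<longrightarrow> hform d n (g *\<^sub>v x) (g *\<^sub>v y) = hform d n x y)}"

definition U0 :: "nat \<Rightarrow> nat \<Rightarrow> complex mat set" where
  "U0 d n = {g \<in> unitary_grp d n. g *\<^sub>v null_vec d n = null_vec d n \<and>
      (\<forall>x. A_vec d n x \<longrightarrow> (\<exists>a \<in> cyc_ring d. g *\<^sub>v x - x = a \<cdot>\<^sub>v null_vec d n))}"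

definition unipotent :: "nat \<Rightarrow> complex mat \<Rightarrow> bool" where
  "unipotent n g \<longleftrightarrow> (\<exists>m. (g - 1\<^sub>m n) ^\<^sub>m m = 0\<^sub>m n n)"

end

theory Submission
  imports Defs
begin

(* Proof idea.  Write q = zeta d, so that A = Z[q] and q^(n+1) = 1 because d divides n + 1.
   The braid u = [s_1, Delta'^2] acts on A^n as the transvection

       x  |->  x + phi(x) v,      phi(x) = (1 - q^-1) (x_2 - (1 + q) x_1),

   where v is the null vector of h and phi is an A-valued linear form with phi(v) = 0.
   All four claims are then instances of general facts about transvections t = 1 + v phi:
   t is unipotent ((t - 1)^2 = 0 as phi(v) = 0), invertible with inverse 1 - v phi, and
   nontrivial as soon as some v_i phi_j is nonzero; since v spans the radical of h,
   h(x + a v, y + b v) = h(x, y), so t is unitary, and t fixes v and moves every x by a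
   multiple of v, i.e. t lies in U_0. *)

section \<open>The ring \<open>A = \<int>[\<zeta>\<^sub>d]\<close> and the null vector\<close>

lemma zeta_power_d: "d > 0 \<Longrightarrow> zeta d ^ d = 1"
  unfolding zeta_def DeMoivre by simp

lemma zeta_nonzero: "zeta d \<noteq> 0"
  unfolding zeta_def by simp

lemma cnj_zeta: "cnj (zeta d) = inverse (zeta d)"
  unfolding zeta_def by (simp add: cis_cnj)

text \<open>For \<open>d \<ge> 3\<close> the root of unity is nontrivial, so we may divide by \<open>q - 1\<close>.\<close>

lemma zeta_ne_1: assumes "d \<ge> 3" shows "zeta d \<noteq> 1"
proof
  have "0 < 2 * pi / real d" "2 * pi / real d < pi"
    using assms pi_gt_zero by (simp_all add: field_simps)
  hence "cos (2 * pi / real d) < 1"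
    using cos_monotone_0_pi[of 0 "2 * pi / real d"] by simp
  moreover assume "zeta d = 1"
  hence "Re (zeta d) = 1" by simp
  ultimately show False unfolding zeta_def by simp
qed

text \<open>For \<open>n = k d - 1\<close> we have \<open>q\<^sup>n\<^sup>+\<^sup>1 = 1\<close>; this is what makes the form degenerate.\<close>

lemma zeta_power_n:
  assumes "d > 0" "k \<ge> 1" "n = k * d - 1"
  shows "zeta d ^ (n + 1) = 1"
proof -
  have "n + 1 = d * k" using assms by (simp add: mult.commute)
  hence "zeta d ^ (n + 1) = (zeta d ^ d) ^ k" by (simp only: power_mult)
  thus ?thesis using zeta_power_d[of d] assms by simp
qed

lemma cyc_ring_iff:
  "z \<in> cyc_ring d \<longleftrightarrow> (\<exists>p::complex poly. (\<forall>i. coeff p i \<in> \<int>) \<and> z = poly p (zeta d))"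
proof
  assume "z \<in> cyc_ring d"
  then obtain p where "z = poly (map_poly of_int p) (zeta d)" unfolding cyc_ring_def by auto
  thus "\<exists>p::complex poly. (\<forall>i. coeff p i \<in> \<int>) \<and> z = poly p (zeta d)"
    by (intro exI[of _ "map_poly of_int p"]) (auto simp: coeff_map_poly)
next
  assume "\<exists>p::complex poly. (\<forall>i. coeff p i \<in> \<int>) \<and> z = poly p (zeta d)"
  then obtain p :: "complex poly" where p: "\<forall>i. coeff p i \<in> \<int>" "z = poly p (zeta d)" by blast
  then obtain q where "p = map_poly of_int q" using intpolyE by blast
  thus "z \<in> cyc_ring d" using p unfolding cyc_ring_def by auto
qed

lemma cyc_ring_add: "a \<in> cyc_ring d \<Longrightarrow> b \<in> cyc_ring d \<Longrightarrow> a + b \<in> cyc_ring d"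
  unfolding cyc_ring_iff by (metis (no_types, lifting) Ints_add coeff_add poly_add)

lemma cyc_ring_mult: "a \<in> cyc_ring d \<Longrightarrow> b \<in> cyc_ring d \<Longrightarrow> a * b \<in> cyc_ring d"
  unfolding cyc_ring_iff
proof (elim exE conjE)
  fix p q assume p: "\<forall>i. coeff p i \<in> \<int>" "a = poly p (zeta d)"
    and q: "\<forall>i. coeff q i \<in> \<int>" "b = poly q (zeta d)"
  have "\<forall>i. coeff (p * q) i \<in> \<int>" using p q by (auto simp: coeff_mult intro!: Ints_mult)
  thus "\<exists>r::complex poly. (\<forall>i. coeff r i \<in> \<int>) \<and> a * b = poly r (zeta d)"
    using p q by (intro exI[of _ "p * q"]) auto
qed

lemma cyc_ring_of_int: "of_int c \<in> cyc_ring d"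
  unfolding cyc_ring_iff by (intro exI[of _ "[:of_int c:]"]) (auto simp: coeff_pCons split: nat.splits)

lemma cyc_ring_zeta: "zeta d \<in> cyc_ring d"
  unfolding cyc_ring_iff by (intro exI[of _ "[:0, 1:]"]) (auto simp: coeff_pCons split: nat.splits)

lemma cyc_ring_0: "0 \<in> cyc_ring d" and cyc_ring_1: "1 \<in> cyc_ring d"
  using cyc_ring_of_int[of 0 d] cyc_ring_of_int[of 1 d] by simp_all

lemma cyc_ring_uminus: "a \<in> cyc_ring d \<Longrightarrow> - a \<in> cyc_ring d"
  using cyc_ring_mult[OF cyc_ring_of_int[of "-1"]] by fastforce

lemma cyc_ring_diff: "a \<in> cyc_ring d \<Longrightarrow> b \<in> cyc_ring d \<Longrightarrow> a - b \<in> cyc_ring d"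
  using cyc_ring_add[OF _ cyc_ring_uminus] by (metis diff_conv_add_uminus)

lemma cyc_ring_power: "a \<in> cyc_ring d \<Longrightarrow> a ^ m \<in> cyc_ring d"
  by (induction m) (auto intro: cyc_ring_1 cyc_ring_mult)

lemma cyc_ring_sum: "(\<And>i. i \<in> I \<Longrightarrow> f i \<in> cyc_ring d) \<Longrightarrow> sum f I \<in> cyc_ring d"
  by (induction I rule: infinite_finite_induct) (auto intro: cyc_ring_0 cyc_ring_add)

lemma cyc_ring_inverse_zeta: "d > 0 \<Longrightarrow> inverse (zeta d) \<in> cyc_ring d"
proof -
  assume "d > 0"
  hence "zeta d * zeta d ^ (d - 1) = 1"
    using zeta_power_d[of d] by (metis power_Suc Suc_diff_1)
  hence "inverse (zeta d) = zeta d ^ (d - 1)"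
    using zeta_nonzero by (metis inverse_unique)
  thus ?thesis using cyc_ring_power[OF cyc_ring_zeta] by simp
qed

lemma null_vec_index: "i < n \<Longrightarrow> null_vec d n $ i = (zeta d ^ (i + 1) - 1) / (zeta d - 1)"
  by (simp add: null_vec_def)

lemma null_vec_carrier[simp]: "null_vec d n \<in> carrier_vec n"
  and null_vec_dim[simp]: "dim_vec (null_vec d n) = n"
  by (simp_all add: null_vec_def)

text \<open>The coordinates \<open>(q\<^sup>i\<^sup>+\<^sup>1 - 1)/(q - 1) = 1 + q + \<dots> + q\<^sup>i\<close> of \<open>v\<close> lie in \<open>A\<close>.\<close>

lemma null_vec_A_vec:
  assumes "d \<ge> 3" shows "A_vec d n (null_vec d n)"
  unfolding A_vec_def
proof (intro conjI allI impI null_vec_carrier)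
  fix i assume "i < n"
  hence "null_vec d n $ i = (\<Sum>j<i + 1. zeta d ^ j)"
    by (simp only: null_vec_index geometric_sum[OF zeta_ne_1[OF assms]])
  thus "null_vec d n $ i \<in> cyc_ring d"
    by (simp only: cyc_ring_sum cyc_ring_power cyc_ring_zeta)
qed

section \<open>Transvections\<close>

lemma mat_eq_by_action:
  fixes A B :: "'a :: semiring_1 mat"
  assumes "A \<in> carrier_mat n n" "B \<in> carrier_mat n n"
    and "\<And>x. x \<in> carrier_vec n \<Longrightarrow> A *\<^sub>v x = B *\<^sub>v x"
  shows "A = B"
proof (rule eq_matI)
  fix i j assume "i < dim_row B" "j < dim_col B"
  hence ij: "i < n" "j < n" using assms by auto
  have "A $$ (i, j) = (A *\<^sub>v unit_vec n j) $ i" using ij assms(1) by auto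
  also have "\<dots> = (B *\<^sub>v unit_vec n j) $ i" using assms(3)[of "unit_vec n j"] by simp
  also have "\<dots> = B $$ (i, j)" using ij assms(2) by auto
  finally show "A $$ (i, j) = B $$ (i, j)" .
qed (use assms in auto)

lemma mat_inverse_unique:
  fixes B G H :: "'a :: semiring_1 mat"
  assumes B: "B \<in> carrier_mat n n" and G: "G \<in> carrier_mat n n" and H: "H \<in> carrier_mat n n"
    and "B * G = 1\<^sub>m n" "G * H = 1\<^sub>m n"
  shows "B = H"
proof -
  have "B = B * (G * H)" using B assms(5) by simp
  also have "\<dots> = (B * G) * H" using assoc_mult_mat[OF B G H] by simp
  also have "\<dots> = H" using H assms(4) by simp
  finally show ?thesis .
qed

definition transvection :: "nat \<Rightarrow> 'a :: comm_ring_1 vec \<Rightarrow> 'a vec \<Rightarrow> 'a mat" where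
  "transvection n v f = mat n n (\<lambda>(i, j). (if i = j then 1 else 0) + v $ i * f $ j)"

lemma transvection_carrier[simp]: "transvection n v f \<in> carrier_mat n n"
  by (simp add: transvection_def)

lemma transvection_mult_vec:
  assumes "v \<in> carrier_vec n" "f \<in> carrier_vec n" "y \<in> carrier_vec n"
  shows "transvection n v f *\<^sub>v y = y + (f \<bullet> y) \<cdot>\<^sub>v v"
proof (rule eq_vecI)
  fix i assume "i < dim_vec (y + (f \<bullet> y) \<cdot>\<^sub>v v)"
  hence i: "i < n" using assms by simp
  have "(transvection n v f *\<^sub>v y) $ i
      = (\<Sum>j\<in>{0..<n}. (if i = j then y $ j else 0) + v $ i * (f $ j * y $ j))"
    using i assms(3) by (auto simp: transvection_def scalar_prod_def algebra_simps intro!: sum.cong)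
  also have "\<dots> = y $ i + v $ i * (f \<bullet> y)"
    using i assms(3) by (simp add: sum.distrib scalar_prod_def sum_distrib_left)
  finally show "(transvection n v f *\<^sub>v y) $ i = (y + (f \<bullet> y) \<cdot>\<^sub>v v) $ i"
    using i assms by (simp add: mult.commute)
qed (use assms in \<open>simp add: transvection_def\<close>)

lemma transvection_fixes:
  assumes "v \<in> carrier_vec n" "f \<in> carrier_vec n" "f \<bullet> v = 0"
  shows "transvection n v f *\<^sub>v v = v"
  using assms by (intro eq_vecI) (auto simp: transvection_mult_vec)

lemma transvection_mult:
  assumes v: "v \<in> carrier_vec n" and f: "f \<in> carrier_vec n" and g: "g \<in> carrier_vec n"
    and fv: "f \<bullet> v = 0"
  shows "transvection n v f * transvection n v g = transvection n v (f + g)"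
proof (rule mat_eq_by_action[of _ n])
  fix y :: "'a vec" assume y: "y \<in> carrier_vec n"
  have "f \<bullet> (y + (g \<bullet> y) \<cdot>\<^sub>v v) = f \<bullet> y"
    using f y v fv by (simp add: scalar_prod_add_distrib[of f n])
  moreover have "(f + g) \<bullet> y = f \<bullet> y + g \<bullet> y"
    using f g y by (simp add: add_scalar_prod_distrib)
  ultimately show "(transvection n v f * transvection n v g) *\<^sub>v y = transvection n v (f + g) *\<^sub>v y"
    using v f g y by (intro eq_vecI)
      (auto simp: transvection_mult_vec assoc_mult_mat_vec[of _ n n _ n] algebra_simps)
qed (auto intro: mult_carrier_mat[of _ n n _ n])

lemma transvection_zero: "transvection n v (0\<^sub>v n) = 1\<^sub>m n"
  by (intro eq_matI) (auto simp: transvection_def)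

lemma transvection_invertible:
  assumes "v \<in> carrier_vec n" "f \<in> carrier_vec n" "f \<bullet> v = 0"
  shows "transvection n v f * transvection n v (- f) = 1\<^sub>m n"
    and "transvection n v (- f) * transvection n v f = 1\<^sub>m n"
proof -
  have "(- f) \<bullet> v = 0" using assms by simp
  thus "transvection n v f * transvection n v (- f) = 1\<^sub>m n"
    "transvection n v (- f) * transvection n v f = 1\<^sub>m n"
    using assms by (simp_all add: transvection_mult transvection_zero)
qed

text \<open>If \<open>\<phi>(v) = 0\<close> then \<open>t - 1\<close> squares to zero, since it has image in \<open>span v\<close> and kills \<open>v\<close>.\<close>

lemma transvection_nilpotent:
  assumes v: "v \<in> carrier_vec n" and f: "f \<in> carrier_vec n" and fv: "f \<bullet> v = 0"
  shows "(transvection n v f - 1\<^sub>m n) ^\<^sub>m 2 = 0\<^sub>m n n"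
proof -
  let ?N = "transvection n v f - 1\<^sub>m n"
  have N: "?N \<in> carrier_mat n n" by (rule minus_carrier_mat) simp
  have N_act: "?N *\<^sub>v y = (f \<bullet> y) \<cdot>\<^sub>v v" if y: "y \<in> carrier_vec n" for y
    using v f y by (intro eq_vecI)
      (auto simp: minus_mult_distrib_mat_vec[OF transvection_carrier one_carrier_mat y]
        transvection_mult_vec)
  have "?N * ?N = 0\<^sub>m n n"
  proof (rule mat_eq_by_action[of _ n])
    fix y :: "'a vec" assume y: "y \<in> carrier_vec n"
    have "(?N * ?N) *\<^sub>v y = ?N *\<^sub>v ((f \<bullet> y) \<cdot>\<^sub>v v)"
      using y by (simp add: assoc_mult_mat_vec[OF N N] N_act)
    also have "\<dots> = 0\<^sub>v n" using v f fv by (intro eq_vecI) (auto simp: N_act)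
    also have "\<dots> = 0\<^sub>m n n *\<^sub>v y" using y by (intro eq_vecI) (auto simp: scalar_prod_def)
    finally show "(?N * ?N) *\<^sub>v y = 0\<^sub>m n n *\<^sub>v y" .
  qed (auto intro: mult_carrier_mat[of _ n n _ n])
  thus ?thesis using N by (simp add: numeral_2_eq_2)
qed

lemma transvection_unipotent:
  assumes "v \<in> carrier_vec n" "f \<in> carrier_vec n" "f \<bullet> v = 0"
  shows "unipotent n (transvection n v f)"
  unfolding unipotent_def using transvection_nilpotent[OF assms] by blast

lemma transvection_nontrivial:
  assumes "i < n" "j < n" "v $ i * f $ j \<noteq> 0"
  shows "transvection n v f \<noteq> 1\<^sub>m n"
proof
  assume "transvection n v f = 1\<^sub>m n"
  hence "transvection n v f $$ (i, j) = 1\<^sub>m n $$ (i, j)" by simp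
  thus False using assms by (simp add: transvection_def)
qed

section \<open>The hermitian form and its radical\<close>

lemma h_gram_hermitian: "cnj (h_gram d j k) = h_gram d k j"
  unfolding h_gram_def Let_def using zeta_nonzero[of d]
  by (auto simp: cnj_zeta field_simps power2_eq_square)

text \<open>\<open>v\<close> lies in the (left) radical of \<open>h\<close>; by hermitian symmetry it is then orthogonal
  to everything from both sides.\<close>

definition h_radical :: "nat \<Rightarrow> nat \<Rightarrow> complex vec \<Rightarrow> bool" where
  "h_radical d n v \<longleftrightarrow> (\<forall>k<n. (\<Sum>j<n. v $ j * h_gram d j k) = 0)"

lemma hform_radical_left:
  assumes "h_radical d n v" shows "hform d n v x = 0"
proof -
  have "hform d n v x = (\<Sum>k<n. (\<Sum>j<n. v $ j * h_gram d j k) * cnj (x $ k))"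
    unfolding hform_def by (subst sum.swap) (simp add: sum_distrib_right)
  thus ?thesis using assms by (simp add: h_radical_def)
qed

lemma hform_radical_right:
  assumes "h_radical d n v" shows "hform d n y v = 0"
proof -
  have inner: "(\<Sum>k<n. h_gram d j k * cnj (v $ k)) = cnj (\<Sum>k<n. v $ k * h_gram d k j)" for j
    by (simp add: h_gram_hermitian mult.commute)
  have "hform d n y v = (\<Sum>j<n. y $ j * (\<Sum>k<n. h_gram d j k * cnj (v $ k)))"
    unfolding hform_def by (simp add: sum_distrib_left mult.assoc)
  also have "\<dots> = (\<Sum>j<n. y $ j * cnj (\<Sum>k<n. v $ k * h_gram d k j))"
    by (simp only: inner)
  also have "\<dots> = 0"
  proof (intro sum.neutral ballI)
    fix j assume "j \<in> {..<n}"
    hence "(\<Sum>k<n. v $ k * h_gram d k j) = 0" using assms by (simp add: h_radical_def)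
    thus "y $ j * cnj (\<Sum>k<n. v $ k * h_gram d k j) = 0" by simp
  qed
  finally show ?thesis .
qed

lemma hform_add_smult:
  assumes "x \<in> carrier_vec n" "y \<in> carrier_vec n" "v \<in> carrier_vec n"
  shows "hform d n (y + a \<cdot>\<^sub>v v) (x + b \<cdot>\<^sub>v v)
       = hform d n y x + a * hform d n v x + cnj b * hform d n y v + a * cnj b * hform d n v v"
proof -
  let ?h = "h_gram d"
  have "hform d n (y + a \<cdot>\<^sub>v v) (x + b \<cdot>\<^sub>v v)
      = (\<Sum>j<n. \<Sum>k<n. y $ j * ?h j k * cnj (x $ k) + a * (v $ j * ?h j k * cnj (x $ k))
          + cnj b * (y $ j * ?h j k * cnj (v $ k)) + a * cnj b * (v $ j * ?h j k * cnj (v $ k)))"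
    unfolding hform_def using assms by (intro sum.cong refl) (simp add: algebra_simps)
  also have "\<dots> = hform d n y x + a * hform d n v x + cnj b * hform d n y v + a * cnj b * hform d n v v"
    unfolding hform_def by (simp only: sum.distrib sum_distrib_left)
  finally show ?thesis .
qed

lemma hform_radical_shift:
  assumes "h_radical d n v" "x \<in> carrier_vec n" "y \<in> carrier_vec n" "v \<in> carrier_vec n"
  shows "hform d n (y + a \<cdot>\<^sub>v v) (x + b \<cdot>\<^sub>v v) = hform d n y x"
  using assms by (simp add: hform_add_smult hform_radical_left hform_radical_right)

lemma A_vec_scalar_prod: "A_vec d n f \<Longrightarrow> A_vec d n x \<Longrightarrow> f \<bullet> x \<in> cyc_ring d"
  unfolding A_vec_def scalar_prod_def by (auto intro!: cyc_ring_sum cyc_ring_mult)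

lemma A_mat_transvection:
  assumes "A_vec d n v" "A_vec d n f" shows "A_mat d n (transvection n v f)"
  using assms unfolding A_mat_def A_vec_def transvection_def
  by (auto intro!: cyc_ring_add cyc_ring_mult intro: cyc_ring_0 cyc_ring_1)

lemma A_vec_uminus: "A_vec d n f \<Longrightarrow> A_vec d n (- f)"
  unfolding A_vec_def by (auto intro!: cyc_ring_uminus)

lemma transvection_unitary:
  assumes v: "A_vec d n v" and f: "A_vec d n f" and fv: "f \<bullet> v = 0" and rad: "h_radical d n v"
  shows "transvection n v f \<in> unitary_grp d n"
proof -
  have vc: "v \<in> carrier_vec n" and fc: "f \<in> carrier_vec n" using v f by (auto simp: A_vec_def)
  have "hform d n (transvection n v f *\<^sub>v x) (transvection n v f *\<^sub>v y) = hform d n x y"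
    if "A_vec d n x" "A_vec d n y" for x y
    using that vc fc rad by (simp add: A_vec_def transvection_mult_vec hform_radical_shift)
  moreover have "A_mat d n (transvection n v (- f))"
    using A_mat_transvection[OF v A_vec_uminus[OF f]] .
  ultimately show ?thesis
    unfolding unitary_grp_def
    using A_mat_transvection[OF v f] transvection_invertible[OF vc fc fv] by blast
qed

lemma transvection_in_U0:
  assumes v: "A_vec d n (null_vec d n)" and f: "A_vec d n f"
    and fv: "f \<bullet> null_vec d n = 0" and rad: "h_radical d n (null_vec d n)"
  shows "transvection n (null_vec d n) f \<in> U0 d n"
proof -
  have fc: "f \<in> carrier_vec n" using f by (simp add: A_vec_def)
  have "transvection n (null_vec d n) f *\<^sub>v x - x = (f \<bullet> x) \<cdot>\<^sub>v null_vec d n"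
    if "x \<in> carrier_vec n" for x
    using that fc by (intro eq_vecI) (auto simp: transvection_mult_vec)
  hence "\<exists>a \<in> cyc_ring d. transvection n (null_vec d n) f *\<^sub>v x - x = a \<cdot>\<^sub>v null_vec d n"
    if "A_vec d n x" for x
    using that f A_vec_scalar_prod by (auto simp: A_vec_def)
  thus ?thesis
    unfolding U0_def
    using transvection_unitary[OF assms] transvection_fixes[OF null_vec_carrier fc fv] by blast
qed

lemma sum_tridiagonal:
  fixes x :: "nat \<Rightarrow> complex"
  assumes p: "p < n"
  shows "(\<Sum>k<n. (if k + 1 = p then a else if k = p then b else if k = p + 1 then c else 0) * x k)
     = (if 1 \<le> p then a * x (p - 1) else 0) + b * x p + (if p + 1 < n then c * x (p + 1) else 0)"
proof -
  have "(\<Sum>k<n. (if k + 1 = p then a else if k = p then b else if k = p + 1 then c else 0) * x k)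
      = (\<Sum>k<n. (if k = p - 1 \<and> 1 \<le> p then a * x k else 0) + (if k = p then b * x k else 0)
            + (if k = p + 1 then c * x k else 0))"
    by (intro sum.cong) auto
  also have "\<dots> = (if 1 \<le> p then a * x (p - 1) else 0) + b * x p + (if p + 1 < n then c * x (p + 1) else 0)"
    using p by (auto simp: sum.distrib)
  finally show ?thesis .
qed

text \<open>For \<open>q\<^sup>n\<^sup>+\<^sup>1 = 1\<close> the vector \<open>v\<close> lies in the radical of \<open>h\<close>: each column of the Gram matrix
  pairs with \<open>v\<close> to a vanishing combination of \<open>(q\<^sup>k - 1), (q\<^sup>k\<^sup>+\<^sup>1 - 1), (q\<^sup>k\<^sup>+\<^sup>2 - 1)\<close>.\<close>

lemma null_vec_radical:
  assumes d: "d \<ge> 3" and q1: "zeta d ^ (n + 1) = 1"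
  shows "h_radical d n (null_vec d n)"
  unfolding h_radical_def
proof (intro allI impI)
  fix k assume k: "k < n"
  let ?q = "zeta d" and ?v = "null_vec d n"
  let ?E = "- (?q + 1)" and ?D = "(?q + 1) ^ 2 / ?q" and ?F = "- (1 + inverse ?q)"
  let ?g = "\<lambda>i. (?q ^ i - 1) / (?q - 1)"
  have "(\<Sum>j<n. ?v $ j * h_gram d j k)
      = (\<Sum>j<n. (if j + 1 = k then ?E else if j = k then ?D else if j = k + 1 then ?F else 0) * ?v $ j)"
    by (intro sum.cong) (auto simp: h_gram_def Let_def mult.commute)
  also have "\<dots> = (if 1 \<le> k then ?E * ?v $ (k - 1) else 0) + ?D * ?v $ k
      + (if k + 1 < n then ?F * ?v $ (k + 1) else 0)"
    by (rule sum_tridiagonal[OF k])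
  also have "\<dots> = ?E * ?g k + ?D * ?g (k + 1) + ?F * ?g (k + 2)"
  proof -
    \<comment> \<open>the boundary terms vanish because \<open>?g 0 = 0\<close> and \<open>?g (n + 1) = 0\<close>\<close>
    have "(if 1 \<le> k then ?E * ?v $ (k - 1) else 0) = ?E * ?g k"
      using k by (cases k) (simp_all add: null_vec_index)
    moreover have "(if k + 1 < n then ?F * ?v $ (k + 1) else 0) = ?F * ?g (k + 2)"
    proof (cases "k + 1 < n")
      case False
      hence "k + 2 = n + 1" using k by simp
      thus ?thesis using False q1 by simp
    qed (simp add: null_vec_index)
    ultimately show ?thesis using k by (simp add: null_vec_index)
  qed
  also have "\<dots> = (?E * (?q ^ k - 1) + ?D * (?q ^ (k + 1) - 1) + ?F * (?q ^ (k + 2) - 1)) / (?q - 1)"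
    by (simp add: add_divide_distrib)
  also have "?E * (?q ^ k - 1) + ?D * (?q ^ (k + 1) - 1) + ?F * (?q ^ (k + 2) - 1) = 0"
  proof -
    have "?q ^ (k + 1) = ?q * ?q ^ k" "?q ^ (k + 2) = ?q * ?q * ?q ^ k"
      by (simp_all add: power_add power2_eq_square)
    thus ?thesis using zeta_nonzero[of d] by (simp add: field_simps power2_eq_square)
  qed
  finally show "(\<Sum>j<n. ?v $ j * h_gram d j k) = 0" by simp
qed

section \<open>Burau generators as row operations\<close>

text \<open>The matrix \<open>T\<^sub>p\<^sub>+\<^sub>1\<close> (and its inverse) only changes coordinate \<open>p\<close>, replacing it by a combination
  \<open>a x\<^sub>p\<^sub>-\<^sub>1 + b x\<^sub>p + c x\<^sub>p\<^sub>+\<^sub>1\<close> of the neighbouring coordinates.\<close>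

definition row_op :: "nat \<Rightarrow> nat \<Rightarrow> complex \<Rightarrow> complex \<Rightarrow> complex \<Rightarrow> complex mat" where
  "row_op n p a b c = mat n n (\<lambda>(i, k). if i = p
      then (if k + 1 = p then a else if k = p then b else if k = p + 1 then c else 0)
      else if i = k then 1 else 0)"

definition row_op_vec :: "nat \<Rightarrow> nat \<Rightarrow> complex \<Rightarrow> complex \<Rightarrow> complex \<Rightarrow> complex vec \<Rightarrow> complex vec" where
  "row_op_vec n p a b c x = vec n (\<lambda>i. if i = p
      then (if 1 \<le> p then a * x $ (p - 1) else 0) + b * x $ p + (if p + 1 < n then c * x $ (p + 1) else 0)
      else x $ i)"

lemma row_op_carrier[simp]: "row_op n p a b c \<in> carrier_mat n n"
  and row_op_vec_carrier[simp]: "row_op_vec n p a b c x \<in> carrier_vec n"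
  by (simp_all add: row_op_def row_op_vec_def)

lemma row_op_mult_vec:
  assumes p: "p < n" and x: "x \<in> carrier_vec n"
  shows "row_op n p a b c *\<^sub>v x = row_op_vec n p a b c x"
proof (rule eq_vecI)
  fix i assume "i < dim_vec (row_op_vec n p a b c x)"
  hence i: "i < n" by (simp add: row_op_vec_def)
  show "(row_op n p a b c *\<^sub>v x) $ i = row_op_vec n p a b c x $ i"
  proof (cases "i = p")
    case True
    thus ?thesis using i x p sum_tridiagonal[OF p, of a b c "\<lambda>k. x $ k"]
      by (simp add: row_op_def row_op_vec_def scalar_prod_def lessThan_atLeast0)
  next
    case False
    have "(row_op n p a b c *\<^sub>v x) $ i = (\<Sum>k\<in>{0..<n}. (if i = k then 1 else 0) * x $ k)"
      using i x False by (simp add: row_op_def scalar_prod_def)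
    also have "\<dots> = (\<Sum>k\<in>{0..<n}. if k = i then x $ k else 0)"
      by (intro sum.cong) auto
    finally show ?thesis using i False by (simp add: row_op_vec_def)
  qed
qed (simp add: row_op_def row_op_vec_def)

lemma row_op_vec_inverse:
  assumes b: "b \<noteq> 0" and x: "x \<in> carrier_vec n"
  shows "row_op_vec n p a b c (row_op_vec n p (- a / b) (1 / b) (- c / b) x) = x"
proof (rule eq_vecI)
  fix i assume "i < dim_vec x"
  thus "row_op_vec n p a b c (row_op_vec n p (- a / b) (1 / b) (- c / b) x) $ i = x $ i"
    using x b by (auto simp: row_op_vec_def field_simps)
qed (use x in \<open>simp add: row_op_vec_def\<close>)

lemma row_op_inverse:
  assumes p: "p < n" and b: "b \<noteq> 0"
  shows "row_op n p a b c * row_op n p (- a / b) (1 / b) (- c / b) = 1\<^sub>m n"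
proof (rule mat_eq_by_action[of _ n])
  fix x :: "complex vec" assume x: "x \<in> carrier_vec n"
  have "(row_op n p a b c * row_op n p (- a / b) (1 / b) (- c / b)) *\<^sub>v x
      = row_op_vec n p a b c (row_op_vec n p (- a / b) (1 / b) (- c / b) x)"
    using p x by (simp add: assoc_mult_mat_vec[of _ n n _ n] row_op_mult_vec)
  also have "\<dots> = 1\<^sub>m n *\<^sub>v x" using row_op_vec_inverse[OF b x] x by simp
  finally show "(row_op n p a b c * row_op n p (- a / b) (1 / b) (- c / b)) *\<^sub>v x = 1\<^sub>m n *\<^sub>v x" .
qed (auto intro: mult_carrier_mat[of _ n n _ n])

lemma burau_gen_row_op: "burau_gen d n (Suc p) = row_op n p (zeta d) (- zeta d) 1"
  unfolding burau_gen_def row_op_def Let_def by (intro eq_matI) auto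

lemma burau_gen_inv_row_op:
  assumes p: "p < n"
  shows "burau_gen_inv d n (Suc p) = row_op n p 1 (- 1 / zeta d) (1 / zeta d)"
proof -
  let ?q = "zeta d"
  let ?G = "burau_gen d n (Suc p)" and ?H = "row_op n p 1 (- 1 / ?q) (1 / ?q)"
  have q: "?q \<noteq> 0" by (rule zeta_nonzero)
  have GH: "?G * ?H = 1\<^sub>m n"
    using row_op_inverse[OF p, of "- ?q" ?q 1] q by (simp add: burau_gen_row_op)
  have HG: "?H * ?G = 1\<^sub>m n"
    using row_op_inverse[OF p, of "- 1 / ?q" 1 "1 / ?q"] q by (simp add: burau_gen_row_op)
  have "\<exists>B. B \<in> carrier_mat n n \<and> ?G * B = 1\<^sub>m n \<and> B * ?G = 1\<^sub>m n"
    using GH HG row_op_carrier by blast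
  hence "burau_gen_inv d n (Suc p) \<in> carrier_mat n n \<and> burau_gen_inv d n (Suc p) * ?G = 1\<^sub>m n"
    unfolding burau_gen_inv_def by (rule someI2_ex) blast
  thus ?thesis using GH mat_inverse_unique[of _ n ?G ?H] by (simp add: burau_gen_row_op)
qed

definition gen_mat :: "nat \<Rightarrow> nat \<Rightarrow> nat \<times> bool \<Rightarrow> complex mat" where
  "gen_mat d n a = (if snd a then burau_gen d n (fst a) else burau_gen_inv d n (fst a))"

definition word_valid :: "nat \<Rightarrow> braid_word \<Rightarrow> bool" where
  "word_valid n w \<longleftrightarrow> (\<forall>(j, b) \<in> set w. 1 \<le> j \<and> j \<le> n)"

lemma word_valid_simps[simp]:
  "word_valid n []"
  "word_valid n ((j, b) # w) \<longleftrightarrow> 1 \<le> j \<and> j \<le> n \<and> word_valid n w"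
  "word_valid n (w1 @ w2) \<longleftrightarrow> word_valid n w1 \<and> word_valid n w2"
  "word_valid n (inv_word w) \<longleftrightarrow> word_valid n w"
  by (auto simp: word_valid_def inv_word_def)

lemma gen_mat_row_op:
  assumes "p < n"
  shows "gen_mat d n (Suc p, True) = row_op n p (zeta d) (- zeta d) 1"
    and "gen_mat d n (Suc p, False) = row_op n p 1 (- 1 / zeta d) (1 / zeta d)"
  using assms by (simp_all add: gen_mat_def burau_gen_row_op burau_gen_inv_row_op)

lemma gen_mat_carrier:
  assumes "1 \<le> j" "j \<le> n" shows "gen_mat d n (j, b) \<in> carrier_mat n n"
proof -
  obtain p where "j = Suc p" "p < n" using assms by (cases j) auto
  thus ?thesis by (cases b) (simp_all add: gen_mat_row_op)
qed

lemma gen_mat_cancel: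
  assumes "1 \<le> j" "j \<le> n" "y \<in> carrier_vec n"
  shows "gen_mat d n (j, \<not> b) *\<^sub>v (gen_mat d n (j, b) *\<^sub>v y) = y"
proof -
  let ?q = "zeta d"
  obtain p where p: "j = Suc p" "p < n" using assms by (cases j) auto
  have q: "- ?q \<noteq> 0" "- 1 / ?q \<noteq> 0" using zeta_nonzero[of d] by simp_all
  show ?thesis
    using p assms(3) q
      row_op_vec_inverse[OF q(2) assms(3), where a = 1 and c = "1 / ?q" and p = p]
      row_op_vec_inverse[OF q(1) assms(3), where a = ?q and c = 1 and p = p, simplified]
    by (cases b) (simp_all add: gen_mat_row_op row_op_mult_vec)
qed

lemma rho_Nil[simp]: "rho d n [] = 1\<^sub>m n"
  by (simp add: rho_def)

lemma rho_Cons: "rho d n (a # w) = gen_mat d n a * rho d n w"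
  by (cases a) (simp add: rho_def gen_mat_def)

lemma rho_carrier: "word_valid n w \<Longrightarrow> rho d n w \<in> carrier_mat n n"
proof (induction w)
  case (Cons a w)
  obtain j b where a: "a = (j, b)" by (cases a)
  thus ?case using Cons by (auto simp: rho_Cons intro!: mult_carrier_mat gen_mat_carrier)
qed simp

lemma rho_mult_vec_carrier:
  "word_valid n w \<Longrightarrow> x \<in> carrier_vec n \<Longrightarrow> rho d n w *\<^sub>v x \<in> carrier_vec n"
  by (rule mult_mat_vec_carrier[OF rho_carrier])

lemma rho_Cons_mult_vec:
  assumes "word_valid n ((j, b) # w)" "x \<in> carrier_vec n"
  shows "rho d n ((j, b) # w) *\<^sub>v x = gen_mat d n (j, b) *\<^sub>v (rho d n w *\<^sub>v x)"
  using assms by (simp add: rho_Cons assoc_mult_mat_vec[of _ n n _ n] gen_mat_carrier rho_carrier)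

lemma rho_append_mult_vec:
  "word_valid n w1 \<Longrightarrow> word_valid n w2 \<Longrightarrow> x \<in> carrier_vec n \<Longrightarrow>
   rho d n (w1 @ w2) *\<^sub>v x = rho d n w1 *\<^sub>v (rho d n w2 *\<^sub>v x)"
proof (induction w1)
  case Nil thus ?case using rho_carrier[of n w2 d] by simp
next
  case (Cons a w1)
  obtain j b where a: "a = (j, b)" by (cases a)
  have y: "rho d n w2 *\<^sub>v x \<in> carrier_vec n"
    using Cons.prems by (simp add: rho_mult_vec_carrier)
  show ?case using Cons y unfolding a
    by (simp add: rho_Cons_mult_vec)
qed

lemma rho_singleton_mult_vec:
  "1 \<le> j \<Longrightarrow> j \<le> n \<Longrightarrow> x \<in> carrier_vec n \<Longrightarrow> rho d n [(j, b)] *\<^sub>v x = gen_mat d n (j, b) *\<^sub>v x"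
  using gen_mat_carrier[of j n d b] by (simp add: rho_Cons)

lemma rho_inv_word_cancel:
  "word_valid n w \<Longrightarrow> x \<in> carrier_vec n \<Longrightarrow> rho d n (inv_word w) *\<^sub>v (rho d n w *\<^sub>v x) = x"
proof (induction w arbitrary: x)
  case Nil thus ?case by (simp add: inv_word_def)
next
  case (Cons a w)
  obtain j b where a: "a = (j, b)" by (cases a)
  have v: "1 \<le> j" "j \<le> n" "word_valid n w" using Cons.prems a by auto
  have y: "rho d n w *\<^sub>v x \<in> carrier_vec n"
    using Cons.prems v(3) by (simp add: rho_mult_vec_carrier)
  have inv: "inv_word (a # w) = inv_word w @ [(j, \<not> b)]" by (simp add: inv_word_def a)
  have z: "gen_mat d n (j, b) *\<^sub>v (rho d n w *\<^sub>v x) \<in> carrier_vec n"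
    using y v by (simp add: mult_mat_vec_carrier[OF gen_mat_carrier])
  have "rho d n (inv_word (a # w)) *\<^sub>v (rho d n (a # w) *\<^sub>v x)
      = rho d n (inv_word w @ [(j, \<not> b)]) *\<^sub>v (gen_mat d n (j, b) *\<^sub>v (rho d n w *\<^sub>v x))"
    using v Cons.prems a inv by (simp add: rho_Cons_mult_vec)
  also have "\<dots> = rho d n (inv_word w) *\<^sub>v (gen_mat d n (j, \<not> b) *\<^sub>v (gen_mat d n (j, b) *\<^sub>v (rho d n w *\<^sub>v x)))"
    using v z by (simp add: rho_append_mult_vec rho_singleton_mult_vec)
  also have "\<dots> = x" using v y Cons.IH Cons.prems by (simp add: gen_mat_cancel)
  finally show ?case .
qed

section \<open>The action of \<open>\<Delta>'\<close> and of the commutator\<close>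

definition block_word :: "nat \<Rightarrow> braid_word" where
  "block_word m = map (\<lambda>j. (j, True)) [2..<m+1]"

text \<open>Closed forms (0-based coordinates) of the actions of \<open>s\<^sub>2 \<cdots> s\<^sub>m\<close> and of \<open>\<Delta>'\<^sub>m\<close>.\<close>

definition block_act :: "complex \<Rightarrow> nat \<Rightarrow> nat \<Rightarrow> complex vec \<Rightarrow> complex vec" where
  "block_act q n m x = vec n (\<lambda>i. if 1 \<le> i \<and> i < m
      then q * x $ (i - 1) - q * x $ (m - 1) + (if m < n then x $ m else 0) else x $ i)"

definition delta_act :: "complex \<Rightarrow> nat \<Rightarrow> nat \<Rightarrow> complex vec \<Rightarrow> complex vec" where
  "delta_act q n m x = vec n (\<lambda>i. if 1 \<le> i \<and> i < m
      then q ^ i * (x $ 0 - x $ (m - i)) + (if m < n then x $ m else 0) else x $ i)"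

lemma delta_act_carrier[simp]: "delta_act q n m x \<in> carrier_vec n"
  by (simp add: delta_act_def)

lemma block_act_step:
  assumes m: "1 \<le> m" "m < n"
  shows "block_act q n m (row_op_vec n m q (- q) 1 x) = block_act q n (Suc m) x"
proof (rule eq_vecI)
  fix i assume "i < dim_vec (block_act q n (Suc m) x)"
  hence i: "i < n" by (simp add: block_act_def)
  consider "i = 0" | "1 \<le> i" "i < m" | "i = m" | "m < i" by linarith
  thus "block_act q n m (row_op_vec n m q (- q) 1 x) $ i = block_act q n (Suc m) x $ i"
  proof cases
    case 2
    have "m - 1 \<noteq> m" "i - 1 \<noteq> m" "m - 1 < n" "i - 1 < n" using 2 i m by auto
    thus ?thesis using 2 i m by (simp add: block_act_def row_op_vec_def algebra_simps)
  qed (use i m in \<open>auto simp: block_act_def row_op_vec_def algebra_simps\<close>)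
qed (simp add: block_act_def)

lemma delta_act_step:
  assumes m: "1 \<le> m" "Suc m \<le> n"
  shows "block_act q n (Suc m) (delta_act q n m x) = delta_act q n (Suc m) x"
proof (rule eq_vecI)
  fix i assume "i < dim_vec (delta_act q n (Suc m) x)"
  hence i: "i < n" by (simp add: delta_act_def)
  let ?y = "delta_act q n m x"
  have y: "?y $ 0 = x $ 0" "?y $ m = x $ m" "m + 1 < n \<Longrightarrow> ?y $ (m + 1) = x $ (m + 1)"
    using m by (simp_all add: delta_act_def)
  consider "i = 0" | "i = 1" | "2 \<le> i" "i \<le> m" | "m < i" by linarith
  thus "block_act q n (Suc m) ?y $ i = delta_act q n (Suc m) x $ i"
  proof cases
    case 2 thus ?thesis using i m y by (simp add: block_act_def delta_act_def algebra_simps)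
  next
    case 3
    have "1 \<le> i - 1" "i - 1 < m" "i - 1 < n" "m - (i - 1) = Suc m - i" using 3 m by auto
    hence yi: "?y $ (i - 1) = q ^ (i - 1) * (x $ 0 - x $ (Suc m - i)) + x $ m"
      using m by (simp add: delta_act_def)
    have "block_act q n (Suc m) ?y $ i
        = q * ?y $ (i - 1) - q * ?y $ m + (if m + 1 < n then ?y $ (m + 1) else 0)"
      using 3 i m by (simp add: block_act_def)
    also have "\<dots> = q * (q ^ (i - 1) * (x $ 0 - x $ (Suc m - i)) + x $ m) - q * x $ m
        + (if m + 1 < n then x $ (m + 1) else 0)"
      using y yi by simp
    also have "\<dots> = (q * q ^ (i - 1)) * (x $ 0 - x $ (Suc m - i)) + (if m + 1 < n then x $ (m + 1) else 0)"
      by (simp add: algebra_simps)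
    also have "q * q ^ (i - 1) = q ^ i" using 3 by (simp add: power_eq_if)
    finally show ?thesis using 3 i m by (simp add: delta_act_def)
  qed (use i m in \<open>simp_all add: block_act_def delta_act_def\<close>)
qed (simp add: block_act_def delta_act_def)

lemma word_valid_block_word: "m \<le> n \<Longrightarrow> word_valid n (block_word m)"
  by (auto simp: word_valid_def block_word_def)

lemma word_valid_delta': "m \<le> n \<Longrightarrow> word_valid n (delta' m)"
  by (auto simp: word_valid_def delta'_def)

lemma delta'_Suc: "1 \<le> m \<Longrightarrow> delta' (Suc m) = block_word (Suc m) @ delta' m"
  by (simp add: delta'_def block_word_def)

lemma rho_block_word:
  "1 \<le> m \<Longrightarrow> m \<le> n \<Longrightarrow> x \<in> carrier_vec n \<Longrightarrow> rho d n (block_word m) *\<^sub>v x = block_act (zeta d) n m x"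
proof (induction m arbitrary: x rule: nat_induct_at_least)
  case base thus ?case by (intro eq_vecI) (auto simp: block_word_def block_act_def)
next
  case (Suc m)
  have "block_word (Suc m) = block_word m @ [(Suc m, True)]"
    using Suc.hyps by (simp add: block_word_def)
  hence "rho d n (block_word (Suc m)) *\<^sub>v x
      = block_act (zeta d) n m (row_op_vec n m (zeta d) (- zeta d) 1 x)"
    using Suc by (simp add: rho_append_mult_vec word_valid_block_word rho_singleton_mult_vec
        gen_mat_row_op row_op_mult_vec)
  thus ?case using Suc by (simp add: block_act_step)
qed

lemma rho_delta':
  "1 \<le> m \<Longrightarrow> m \<le> n \<Longrightarrow> x \<in> carrier_vec n \<Longrightarrow> rho d n (delta' m) *\<^sub>v x = delta_act (zeta d) n m x"
proof (induction m rule: nat_induct_at_least)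
  case base thus ?case by (intro eq_vecI) (auto simp: delta'_def delta_act_def)
next
  case (Suc m)
  hence "rho d n (delta' (Suc m)) *\<^sub>v x = block_act (zeta d) n (Suc m) (delta_act (zeta d) n m x)"
    by (simp add: delta'_Suc rho_append_mult_vec word_valid_block_word word_valid_delta'
        rho_block_word rho_mult_vec_carrier)
  thus ?case using Suc by (simp add: delta_act_step)
qed

text \<open>\<open>\<Delta>'\<^sup>2\<close> acts as \<open>x\<^sub>i \<mapsto> q\<^sup>-\<^sup>1 x\<^sub>i + (q\<^sup>i - q\<^sup>-\<^sup>1) x\<^sub>1\<close> (using \<open>q\<^sup>n = q\<^sup>-\<^sup>1\<close>); its inverse
  is \<open>y\<^sub>i \<mapsto> q y\<^sub>i - (q\<^sup>i\<^sup>+\<^sup>1 - 1) y\<^sub>1\<close>.\<close>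

definition delta_sq_act :: "complex \<Rightarrow> nat \<Rightarrow> complex vec \<Rightarrow> complex vec" where
  "delta_sq_act q n x = vec n (\<lambda>i. inverse q * x $ i + (q ^ i - inverse q) * x $ 0)"

definition delta_sq_inv_act :: "complex \<Rightarrow> nat \<Rightarrow> complex vec \<Rightarrow> complex vec" where
  "delta_sq_inv_act q n y = vec n (\<lambda>i. q * y $ i - (q ^ (i + 1) - 1) * y $ 0)"

lemma delta_sq_act_carrier[simp]: "delta_sq_act q n x \<in> carrier_vec n"
  and delta_sq_inv_act_carrier[simp]: "delta_sq_inv_act q n y \<in> carrier_vec n"
  by (simp_all add: delta_sq_act_def delta_sq_inv_act_def)

lemma delta_act_twice:
  assumes q1: "q ^ (n + 1) = 1"
  shows "delta_act q n n (delta_act q n n x) = delta_sq_act q n x"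
proof (rule eq_vecI)
  fix i assume "i < dim_vec (delta_sq_act q n x)"
  hence i: "i < n" by (simp add: delta_sq_act_def)
  have qn: "q ^ n = inverse q"
    using q1 by (metis power_Suc Suc_eq_plus1 inverse_unique)
  show "delta_act q n n (delta_act q n n x) $ i = delta_sq_act q n x $ i"
  proof (cases "i = 0")
    case False
    have "1 \<le> n - i" "n - i < n" "n - (n - i) = i" using False i by auto
    hence "delta_act q n n (delta_act q n n x) $ i = q ^ i * x $ 0 - (q ^ i * q ^ (n - i)) * (x $ 0 - x $ i)"
      using False i by (simp add: delta_act_def algebra_simps)
    also have "q ^ i * q ^ (n - i) = inverse q"
      using i qn by (simp flip: power_add)
    finally show ?thesis using i by (simp add: delta_sq_act_def algebra_simps)
  qed (use i in \<open>simp add: delta_act_def delta_sq_act_def algebra_simps\<close>)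
qed (simp add: delta_act_def delta_sq_act_def)

lemma delta_sq_act_inverse:
  assumes "q \<noteq> 0" "y \<in> carrier_vec n"
  shows "delta_sq_act q n (delta_sq_inv_act q n y) = y"
  using assms by (intro eq_vecI) (auto simp: delta_sq_act_def delta_sq_inv_act_def field_simps)

lemma commutator_act:
  assumes q: "q \<noteq> 0" and n: "n \<ge> 2" and y: "y \<in> carrier_vec n"
  shows "row_op_vec n 0 q (- q) 1 (delta_sq_act q n
           (row_op_vec n 0 1 (- 1 / q) (1 / q) (delta_sq_inv_act q n y)))
       = vec n (\<lambda>i. y $ i + (q ^ i - inverse q) * (y $ 1 - (1 + q) * y $ 0))"
proof -
  define t where "t = row_op_vec n 0 1 (- 1 / q) (1 / q) (delta_sq_inv_act q n y)"
  define z where "z = delta_sq_act q n t"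
  have t0: "t $ 0 = y $ 1 - q * y $ 0"
    using n q by (simp add: t_def row_op_vec_def delta_sq_inv_act_def field_simps power2_eq_square)
  have ti: "t $ i = q * y $ i - (q ^ (i + 1) - 1) * y $ 0" if "1 \<le> i" "i < n" for i
    using that by (simp add: t_def row_op_vec_def delta_sq_inv_act_def)
  have zi: "z $ i = inverse q * t $ i + (q ^ i - inverse q) * t $ 0" if "i < n" for i
    using that by (simp add: z_def delta_sq_act_def)
  show ?thesis
    unfolding t_def[symmetric] z_def[symmetric]
  proof (rule eq_vecI)
    fix i assume "i < dim_vec (vec n (\<lambda>i. y $ i + (q ^ i - inverse q) * (y $ 1 - (1 + q) * y $ 0)))"
    hence i: "i < n" by simp
    show "row_op_vec n 0 q (- q) 1 z $ i = vec n (\<lambda>i. y $ i + (q ^ i - inverse q) * (y $ 1 - (1 + q) * y $ 0)) $ i"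
    proof (cases "i = 0")
      case True
      have t1: "t $ 1 = q * y $ 1 - (q * q - 1) * y $ 0" using ti[of 1] n by simp
      have "row_op_vec n 0 q (- q) 1 z $ 0 = - q * z $ 0 + z $ 1"
        using n by (simp add: row_op_vec_def)
      also have "\<dots> = - q * t $ 0 + (inverse q * t $ 1 + (q - inverse q) * t $ 0)"
        using n zi[of 0] zi[of 1] by (simp add: algebra_simps)
      also have "\<dots> = y $ 0 + (1 - inverse q) * (y $ 1 - (1 + q) * y $ 0)"
        using q unfolding t0 t1 by (simp add: field_simps power2_eq_square)
      finally show ?thesis using True n by simp
    next
      case False
      have t_i: "t $ i = q * y $ i - (q ^ (i + 1) - 1) * y $ 0" using ti False i by simp
      have "row_op_vec n 0 q (- q) 1 z $ i = inverse q * t $ i + (q ^ i - inverse q) * t $ 0"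
        using False i zi by (simp add: row_op_vec_def)
      also have "\<dots> = y $ i + (q ^ i - inverse q) * (y $ 1 - (1 + q) * y $ 0)"
        unfolding t0 t_i using q by (simp add: field_simps)
      finally show ?thesis using i by simp
    qed
  qed (simp add: row_op_vec_def)
qed

lemma rho_delta_sq:
  assumes "zeta d ^ (n + 1) = 1" "n \<ge> 1" "x \<in> carrier_vec n"
  shows "rho d n (delta' n @ delta' n) *\<^sub>v x = delta_sq_act (zeta d) n x"
  using assms by (simp add: rho_append_mult_vec word_valid_delta' rho_delta' delta_act_twice)

lemma rho_inv_delta_sq:
  assumes "zeta d ^ (n + 1) = 1" "n \<ge> 1" "y \<in> carrier_vec n"
  shows "rho d n (inv_word (delta' n @ delta' n)) *\<^sub>v y = delta_sq_inv_act (zeta d) n y"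
proof -
  let ?x = "delta_sq_inv_act (zeta d) n y"
  have x: "?x \<in> carrier_vec n" by simp
  have "rho d n (delta' n @ delta' n) *\<^sub>v ?x = y"
    using assms x by (simp add: rho_delta_sq delta_sq_act_inverse zeta_nonzero)
  thus ?thesis using rho_inv_word_cancel[OF _ x, of "delta' n @ delta' n" d]
    by (simp add: word_valid_delta')
qed

definition u_functional :: "nat \<Rightarrow> nat \<Rightarrow> complex vec" where
  "u_functional d n = vec n (\<lambda>j. (if j = 1 then 1 - inverse (zeta d) else 0)
      - (if j = 0 then (1 - inverse (zeta d)) * (1 + zeta d) else 0))"

lemma u_functional_carrier[simp]: "u_functional d n \<in> carrier_vec n"
  by (simp add: u_functional_def)

lemma u_functional_scalar_prod:
  assumes "n \<ge> 2" "y \<in> carrier_vec n"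
  shows "u_functional d n \<bullet> y = (1 - inverse (zeta d)) * (y $ 1 - (1 + zeta d) * y $ 0)"
proof -
  have "u_functional d n \<bullet> y = (\<Sum>j\<in>{0..<n}. (if j = 1 then (1 - inverse (zeta d)) * y $ j else 0)
      - (if j = 0 then (1 - inverse (zeta d)) * (1 + zeta d) * y $ j else 0))"
    using assms by (auto simp: u_functional_def scalar_prod_def left_diff_distrib intro: sum.cong)
  also have "\<dots> = (1 - inverse (zeta d)) * (y $ 1 - (1 + zeta d) * y $ 0)"
    using assms by (simp add: sum_subtractf algebra_simps)
  finally show ?thesis .
qed

lemma A_vec_u_functional: "d \<ge> 3 \<Longrightarrow> A_vec d n (u_functional d n)"
  unfolding A_vec_def u_functional_def
  by (auto intro!: cyc_ring_diff cyc_ring_mult cyc_ring_add cyc_ring_uminus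
      intro: cyc_ring_0 cyc_ring_1 cyc_ring_zeta cyc_ring_inverse_zeta)

lemma u_functional_null_vec:
  assumes "d \<ge> 3" "n \<ge> 2"
  shows "u_functional d n \<bullet> null_vec d n = 0"
proof -
  have "zeta d - 1 \<noteq> 0" using zeta_ne_1[OF assms(1)] by simp
  thus ?thesis using assms
    by (simp add: u_functional_scalar_prod null_vec_index field_simps power2_eq_square)
qed

lemma rho_u_word:
  assumes d: "d \<ge> 3" and q1: "zeta d ^ (n + 1) = 1" and n: "n \<ge> 2"
  shows "rho d n (u_word n) = transvection n (null_vec d n) (u_functional d n)"
proof -
  let ?q = "zeta d" and ?D = "delta' n @ delta' n"
  have u: "u_word n = [(1, True)] @ ?D @ [(1, False)] @ inv_word ?D"
    by (simp add: u_word_def inv_word_def)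
  have valid: "word_valid n ?D" by (simp add: word_valid_delta')
  have q: "?q \<noteq> 0" "?q - 1 \<noteq> 0" using zeta_nonzero zeta_ne_1[OF d] by simp_all
  show ?thesis
  proof (rule mat_eq_by_action[of _ n])
    show "rho d n (u_word n) \<in> carrier_mat n n"
      using n valid unfolding u by (simp add: rho_carrier)
  next
    fix y :: "complex vec" assume y: "y \<in> carrier_vec n"
    have s1: "word_valid n [(1, b)]" for b using n by simp
    have "rho d n (u_word n) *\<^sub>v y = rho d n [(1, True)] *\<^sub>v (rho d n ?D *\<^sub>v
           (rho d n [(1, False)] *\<^sub>v (rho d n (inv_word ?D) *\<^sub>v y)))"
      unfolding u using valid s1 y
      by (simp only: rho_append_mult_vec rho_mult_vec_carrier word_valid_simps(3,4) simp_thms)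
    also have "\<dots> = row_op_vec n 0 ?q (- ?q) 1 (delta_sq_act ?q n
           (row_op_vec n 0 1 (- 1 / ?q) (1 / ?q) (delta_sq_inv_act ?q n y)))"
      using n y q1 by (simp add: rho_inv_delta_sq rho_delta_sq rho_singleton_mult_vec
          gen_mat_row_op[of 0, simplified] row_op_mult_vec)
    also have "\<dots> = vec n (\<lambda>i. y $ i + (?q ^ i - inverse ?q) * (y $ 1 - (1 + ?q) * y $ 0))"
      by (rule commutator_act[OF q(1) n y])
    also have "\<dots> = y + ((1 - inverse ?q) * (y $ 1 - (1 + ?q) * y $ 0)) \<cdot>\<^sub>v null_vec d n"
      using y q by (intro eq_vecI) (auto simp: null_vec_index field_simps)
    also have "\<dots> = transvection n (null_vec d n) (u_functional d n) *\<^sub>v y"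
      using n y by (simp add: transvection_mult_vec u_functional_scalar_prod)
    finally show "rho d n (u_word n) *\<^sub>v y = transvection n (null_vec d n) (u_functional d n) *\<^sub>v y" .
  qed simp
qed

theorem proposition4p6:
  fixes d k n :: nat
  assumes "d \<ge> 3" and "k \<ge> 1" and "n = k * d - 1"
  shows "rho d n (u_word n) \<in> unitary_grp d n
       \<and> unipotent n (rho d n (u_word n))
       \<and> rho d n (u_word n) \<noteq> 1\<^sub>m n
       \<and> rho d n (u_word n) \<in> U0 d n"
proof -
  let ?v = "null_vec d n" and ?f = "u_functional d n"
  have d: "d \<ge> 3" using assms(1) .
  have "1 * 3 \<le> k * d" using assms by (intro mult_le_mono) auto
  hence n: "n \<ge> 2" using assms(3) by simp
  have q1: "zeta d ^ (n + 1) = 1" using zeta_power_n[of d k n] assms by simp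
  have v: "A_vec d n ?v" and f: "A_vec d n ?f" and fv: "?f \<bullet> ?v = 0" and rad: "h_radical d n ?v"
    using d n q1 by (simp_all add: null_vec_A_vec A_vec_u_functional u_functional_null_vec null_vec_radical)
  have "?v $ 0 * ?f $ 1 \<noteq> 0"
    using n zeta_nonzero[of d] zeta_ne_1[OF d] by (simp add: null_vec_index u_functional_def field_simps)
  hence "transvection n ?v ?f \<noteq> 1\<^sub>m n"
    using n by (intro transvection_nontrivial[of 0 n 1]) auto
  thus ?thesis
    using rho_u_word[OF d q1 n] transvection_unitary[OF v f fv rad] transvection_in_U0[OF v f fv rad]
      transvection_unipotent[OF null_vec_carrier u_functional_carrier fv]
    by simp
qed

end
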